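(* Let $X\subseteq 2^\omega$ be such that for all distinct $x,y\in X$ the set $\{n: x(n)\neq y(n)\}$ is infinite, and let $Y\subseteq X$. Let $N$ be a model of ZFC containing $X$ and $Y$, and let $G$ be $\mathbb{Q}(X,Y)$-generic over $N$. For $n<\omega$ put $U_n^G=\bigcup\{[s]: \exists r\in G\ (n,s)\in r\}$. Then $X\cap\bigcap_{n<\omega}U_n^G = X\setminus Y$.
   Context: For $s\in 2^{<\omega}$, $[s]=\{y\in 2^\omega: s\subseteq y\}$ and $|s|$ is the length of $s$. For $x\in 2^\omega$, $s\in 2^{<\omega}$, $k<\omega$, define $\mathrm{swap}(x,s,k)=\{y\in 2^\omega: s\subseteq y,\ |\{i\geq |s|: y(i)\neq x(i)\}|\leq k\}$. The poset $\mathbb{Q}(X,Y)$ consists of all finite sets $r$ of elements of the form $(n,s)$ with $n<\omega$, $s\in 2^{<\omega}$, or of the form $(n,(x,t,k))$ with $x\in Y$, $t\in 2^{<\omega}$, $n,k<\omega$, subject to the condition: whenever $(n,s)\in r$ and $(n,(x,t,k))\in r$ (same $n$), then $[s]\cap\mathrm{swap}(x,t,k)=\emptyset$. The ordering is reverse inclusion: $r_1\le r_2$ iff $r_1\supseteq r_2$. *)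

theory Defs
  imports Main
begin

type_synonym cantor = "nat \<Rightarrow> bool"
type_synonym fseq = "bool list"

definition cyl :: "fseq \<Rightarrow> cantor set" where
  "cyl s = {y. \<forall>i<length s. y i = s ! i}"

definition swap :: "cantor \<Rightarrow> fseq \<Rightarrow> nat \<Rightarrow> cantor set" where
  "swap x s k = {y. y \<in> cyl s \<and> finite {i. length s \<le> i \<and> y i \<noteq> x i}
                   \<and> card {i. length s \<le> i \<and> y i \<noteq> x i} \<le> k}"

text \<open>Elements of conditions: (n, Inl s) stands for (n,s);
  (n, Inr (x,t,k)) stands for (n,(x,t,k)).\<close>
type_synonym qelem = "nat \<times> (fseq + (cantor \<times> fseq \<times> nat))"

definition Qposet :: "cantor set \<Rightarrow> cantor set \<Rightarrow> qelem set set" where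
  "Qposet X Y = {r. finite r
      \<and> (\<forall>n x t k. (n, Inr (x, t, k)) \<in> r \<longrightarrow> x \<in> Y)
      \<and> (\<forall>n s x t k. (n, Inl s) \<in> r \<longrightarrow> (n, Inr (x, t, k)) \<in> r
                     \<longrightarrow> cyl s \<inter> swap x t k = {})}"

definition qle :: "qelem set \<Rightarrow> qelem set \<Rightarrow> bool" where
  "qle r1 r2 \<longleftrightarrow> r2 \<subseteq> r1"

definition dense_in :: "qelem set set \<Rightarrow> qelem set set \<Rightarrow> bool" where
  "dense_in P D \<longleftrightarrow> D \<subseteq> P \<and> (\<forall>p\<in>P. \<exists>q\<in>D. qle q p)"

definition filter_in :: "qelem set set \<Rightarrow> qelem set set \<Rightarrow> bool" where
  "filter_in P G \<longleftrightarrow> G \<subseteq> P \<and> G \<noteq> {}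
     \<and> (\<forall>p\<in>G. \<forall>q\<in>P. qle p q \<longrightarrow> q \<in> G)
     \<and> (\<forall>p\<in>G. \<forall>q\<in>G. \<exists>r\<in>G. qle r p \<and> qle r q)"

text \<open>G is generic for the family \<N> of sets of conditions (the subsets of
  the poset that belong to the ground model N): G is a filter meeting every
  dense set in \<N>.\<close>
definition generic_over :: "qelem set set set \<Rightarrow> qelem set set \<Rightarrow> qelem set set \<Rightarrow> bool" where
  "generic_over \<N> P G \<longleftrightarrow> filter_in P G \<and> (\<forall>D\<in>\<N>. dense_in P D \<longrightarrow> G \<inter> D \<noteq> {})"

definition UG :: "qelem set set \<Rightarrow> nat \<Rightarrow> cantor set" where
  "UG G n = \<Union> {cyl s | s. \<exists>r\<in>G. (n, Inl s) \<in> r}"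

text \<open>Subsets of the poset definable in N from the parameters X, Y, x, n
  (used to render "N is a model of ZFC containing X and Y").\<close>
definition Dx :: "cantor set \<Rightarrow> cantor set \<Rightarrow> cantor \<Rightarrow> nat \<Rightarrow> qelem set set" where
  "Dx X Y x n = {r \<in> Qposet X Y. \<exists>s. x \<in> cyl s \<and> (n, Inl s) \<in> r}"

definition Ey :: "cantor set \<Rightarrow> cantor set \<Rightarrow> cantor \<Rightarrow> qelem set set" where
  "Ey X Y y = {r \<in> Qposet X Y. \<exists>n. (n, Inr (y, [], 0)) \<in> r}"

end

theory Submission
  imports Defs
begin

text \<open>If x \<in> X - Y, any condition can be extended by a pair (n, s) with x \<in> [s]:
  each of the finitely many promises (n, (y, t, k)) in the condition has y \<in> Y, so
  x differs from y infinitely often, and a long enough initial segment s of x already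
  disagrees with y at more than k places beyond |t|, whence [s] \<inter> swap(y, t, k) = \<emptyset>.
  If y \<in> Y, genericity adds a promise (n, (y, [], 0)) at a fresh level n, and since
  y \<in> swap(y, [], 0) no (n, s) in the generic filter has y \<in> [s]; so y \<notin> U_n.\<close>

lemma swap_disjoint_cyl_prefix:
  fixes x y :: cantor
  assumes "infinite {i. x i \<noteq> y i}"
  shows "\<forall>\<^sub>F M in sequentially. cyl (map x [0..<M]) \<inter> swap y t k = {}"
proof -
  have "infinite ({i. x i \<noteq> y i} - {..<length t})"
    using assms by simp
  then obtain F where F: "finite F" "card F = Suc k" "F \<subseteq> {i. x i \<noteq> y i} - {..<length t}"
    by (meson infinite_arbitrarily_large)
  have avoid: "cyl (map x [0..<M]) \<inter> swap y t k = {}" if M: "\<forall>i\<in>F. i < M" for M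
  proof (rule equals0I, elim IntE)
    fix z assume z: "z \<in> cyl (map x [0..<M])" "z \<in> swap y t k"
    let ?D = "{i. length t \<le> i \<and> z i \<noteq> y i}"
    have agree: "z i = x i" if "i < M" for i
      using z(1) that by (simp add: cyl_def)
    have D: "finite ?D" "card ?D \<le> k"
      using z(2) by (simp_all add: swap_def)
    have "F \<subseteq> ?D"
      using F(3) M agree by auto
    then have "card F \<le> card ?D"
      using D(1) by (rule card_mono[rotated])
    with D(2) F(2) show False
      by simp
  qed
  have "\<forall>\<^sub>F M in sequentially. \<forall>i\<in>F. i < M"
    using F(1) by (simp add: eventually_ball_finite)
  then show ?thesis
    by (rule eventually_mono) (rule avoid)
qed

lemma finite_Inr_entries:
  assumes "finite r"
  shows "finite {v. (n, Inr v) \<in> r}"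
proof (rule finite_subset)
  show "{v. (n, Inr v) \<in> r} \<subseteq> (\<lambda>e. projr (snd e)) ` r"
    by force
qed (use assms in simp)

lemma Qposet_insert_Inl:
  assumes "r \<in> Qposet X Y"
    and "\<forall>y t k. (n, Inr (y, t, k)) \<in> r \<longrightarrow> cyl s \<inter> swap y t k = {}"
  shows "insert (n, Inl s) r \<in> Qposet X Y"
  using assms unfolding Qposet_def by blast

lemma Qposet_insert_Inr:
  assumes "r \<in> Qposet X Y" "y \<in> Y" "n \<notin> fst ` r"
  shows "insert (n, Inr (y, t, k)) r \<in> Qposet X Y"
  using assms unfolding Qposet_def by (fastforce intro: rev_image_eqI)

lemma Dx_dense:
  assumes "\<forall>y\<in>Y. infinite {i. x i \<noteq> y i}"
  shows "dense_in (Qposet X Y) (Dx X Y x n)"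
  unfolding dense_in_def
proof (intro conjI ballI)
  show "Dx X Y x n \<subseteq> Qposet X Y"
    by (auto simp: Dx_def)
next
  fix r assume r: "r \<in> Qposet X Y"
  let ?R = "{v. (n, Inr v) \<in> r}"
  let ?avoid = "\<lambda>M (y, t, k). cyl (map x [0..<M]) \<inter> swap y t k = {}"
  have "finite ?R"
    using r by (simp add: Qposet_def finite_Inr_entries)
  moreover have "\<forall>v\<in>?R. \<forall>\<^sub>F M in sequentially. ?avoid M v"
  proof
    fix v assume "v \<in> ?R"
    moreover obtain y t k where v: "v = (y, t, k)"
      by (cases v) auto
    ultimately have "y \<in> Y"
      using r unfolding Qposet_def by blast
    then show "\<forall>\<^sub>F M in sequentially. ?avoid M v"
      using assms v by (simp add: swap_disjoint_cyl_prefix)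
  qed
  ultimately have "\<forall>\<^sub>F M in sequentially. \<forall>v\<in>?R. ?avoid M v"
    by (rule eventually_ball_finite)
  then obtain M where "\<forall>v\<in>?R. ?avoid M v"
    by (auto simp: eventually_sequentially)
  then have "insert (n, Inl (map x [0..<M])) r \<in> Qposet X Y"
    using r by (intro Qposet_insert_Inl) auto
  moreover have "x \<in> cyl (map x [0..<M])"
    by (simp add: cyl_def)
  ultimately show "\<exists>q\<in>Dx X Y x n. qle q r"
    unfolding Dx_def qle_def by blast
qed

lemma Ey_dense:
  assumes "y \<in> Y"
  shows "dense_in (Qposet X Y) (Ey X Y y)"
  unfolding dense_in_def
proof (intro conjI ballI)
  show "Ey X Y y \<subseteq> Qposet X Y"
    by (auto simp: Ey_def)
next
  fix r assume r: "r \<in> Qposet X Y"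
  then have "finite (fst ` r)"
    by (simp add: Qposet_def)
  then obtain n where "n \<notin> fst ` r"
    using ex_new_if_finite infinite_UNIV_nat by blast
  then have "insert (n, Inr (y, [], 0)) r \<in> Qposet X Y"
    using r assms by (intro Qposet_insert_Inr)
  then show "\<exists>q\<in>Ey X Y y. qle q r"
    unfolding Ey_def qle_def by blast
qed

lemma generic_meets_dense:
  assumes "generic_over \<N> P G" "D \<in> \<N>" "dense_in P D"
  obtains r where "r \<in> G" "r \<in> D"
  using assms by (auto simp: generic_over_def)

lemma generic_Qposet_disjoint:
  assumes "generic_over \<N> (Qposet X Y) G" "r1 \<in> G" "r2 \<in> G"
    and "(n, Inl s) \<in> r1" "(n, Inr (y, t, k)) \<in> r2"
  shows "cyl s \<inter> swap y t k = {}"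
proof -
  obtain r where r: "r \<in> G" "qle r r1" "qle r r2"
    using assms(1-3) unfolding generic_over_def filter_in_def by blast
  then have "r \<in> Qposet X Y"
    using assms(1) unfolding generic_over_def filter_in_def by blast
  moreover have "(n, Inl s) \<in> r" "(n, Inr (y, t, k)) \<in> r"
    using r assms(4,5) unfolding qle_def by auto
  ultimately show ?thesis
    unfolding Qposet_def by blast
qed

lemma mem_UG_iff: "x \<in> UG G n \<longleftrightarrow> (\<exists>r\<in>G. \<exists>s. (n, Inl s) \<in> r \<and> x \<in> cyl s)"
  unfolding UG_def by blast

lemma self_mem_swap: "y \<in> swap y [] 0"
  by (simp add: swap_def cyl_def)

lemma generic_mem_UG:
  assumes "generic_over \<N> (Qposet X Y) G" "Dx X Y x n \<in> \<N>"
    and "\<forall>y\<in>Y. infinite {i. x i \<noteq> y i}"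
  shows "x \<in> UG G n"
proof -
  obtain r where "r \<in> G" "r \<in> Dx X Y x n"
    using assms(1,2) Dx_dense[OF assms(3)] by (rule generic_meets_dense)
  then show ?thesis
    unfolding Dx_def mem_UG_iff by blast
qed

lemma generic_not_mem_UG:
  assumes "generic_over \<N> (Qposet X Y) G" "Ey X Y y \<in> \<N>" "y \<in> Y"
  obtains n where "y \<notin> UG G n"
proof -
  obtain r0 where "r0 \<in> G" "r0 \<in> Ey X Y y"
    using assms(1,2) Ey_dense[OF assms(3)] by (rule generic_meets_dense)
  then obtain n where r0: "r0 \<in> G" "(n, Inr (y, [], 0)) \<in> r0"
    unfolding Ey_def by blast
  have "y \<notin> UG G n"
  proof
    assume "y \<in> UG G n"
    then obtain r1 s where r1: "r1 \<in> G" "(n, Inl s) \<in> r1" "y \<in> cyl s"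
      unfolding mem_UG_iff by blast
    have "cyl s \<inter> swap y [] 0 = {}"
      using generic_Qposet_disjoint[OF assms(1) r1(1) r0(1) r1(2) r0(2)] .
    then show False
      using r1(3) self_mem_swap by (metis IntI empty_iff)
  qed
  then show ?thesis
    by (rule that)
qed

theorem mainTheorem2:
  fixes X Y :: "cantor set"
    and \<N> :: "qelem set set set"
    and G :: "qelem set set"
  assumes "\<forall>x\<in>X. \<forall>y\<in>X. x \<noteq> y \<longrightarrow> infinite {n. x n \<noteq> y n}"
    and "Y \<subseteq> X"
    and "\<forall>x\<in>X. \<forall>n. Dx X Y x n \<in> \<N>"
    and "\<forall>y\<in>Y. Ey X Y y \<in> \<N>"
    and "generic_over \<N> (Qposet X Y) G"
  shows "X \<inter> (\<Inter>n. UG G n) = X - Y"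
proof -
  have "x \<in> UG G n" if x: "x \<in> X" "x \<notin> Y" for x n
  proof (rule generic_mem_UG[OF assms(5)])
    show "Dx X Y x n \<in> \<N>"
      using assms(3) x(1) by blast
    show "\<forall>y\<in>Y. infinite {i. x i \<noteq> y i}"
      using assms(1,2) x by (metis in_mono)
  qed
  moreover have "\<exists>n. y \<notin> UG G n" if "y \<in> Y" for y
    using generic_not_mem_UG[OF assms(5)] assms(4) that by metis
  ultimately show ?thesis
    by auto blast
qed

end
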